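(* Let $l:\mathbb{Z}^2\to\mathcal{L}^4_0$ be a principal contact element net with one family of spherical parameter lines $\{l_{i,j}\}_{i\in\mathbb{Z}}$. Then for any $j_0,j_1\in\mathbb{Z}$ there is a projective transformation $f_{j_0,j_1}:\bigvee_i l_{i,j_0}\to\bigvee_i l_{i,j_1}$ such that $f_{j_0,j_1}(l_{i,j_0})=l_{i,j_1}$ for all $i\in\mathbb{Z}$.
   Context: Let $e_1,\dots,e_6$ be an orthonormal basis of $\mathbb{R}^{4,2}$ with $\langle e_i,e_i\rangle=1$ for $i\le4$ and $\langle e_5,e_5\rangle=\langle e_6,e_6\rangle=-1$. The Lie quadric is $\mathcal{L}^4=\{[x]\in\mathbb{R}\mathrm{P}^5:\langle x,x\rangle=0\}$ and $\mathcal{L}^4_0$ the set of lines contained in $\mathcal{L}^4$. A principal contact element net is a map $l:\mathbb{Z}^2\to\mathcal{L}^4_0$ such that neighbouring lines ($l_{i,j},l_{i+1,j}$ and $l_{i,j},l_{i,j+1}$) intersect. $\bigvee$ denotes projective span. The net has one family of spherical parameter lines $\{l_{i,j}\}_{i\in\mathbb{Z}}$ if for every $j$ the span $\bigvee_i l_{i,j}$ is $4$-dimensional and the planes $\{l_{i,j}\vee l_{i,j+1}\}_{i\in\mathbb{Z}}$ are concurrent (have a common point). Standing assumption: all data are generic (in general position subject to the stated constraints). *)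

theory Defs
  imports "HOL-Analysis.Analysis"
begin

text \<open>Points of RP^5 are represented by nonzero vectors of real^6 (type 6, indices 1..6);
  projective subspaces of projective dimension k by linear subspaces of dimension k+1;
  projective span by linear span of the union; projective intersection nonempty iff
  the linear intersection is not the zero subspace.\<close>

definition lie_form :: "real^6 \<Rightarrow> real^6 \<Rightarrow> real" where
  "lie_form x y = x$1*y$1 + x$2*y$2 + x$3*y$3 + x$4*y$4 - x$5*y$5 - x$6*y$6"

text \<open>An element of L^4_0: a projective line contained in the Lie quadric.\<close>
definition lie_line :: "(real^6) set \<Rightarrow> bool" where
  "lie_line L \<longleftrightarrow> subspace L \<and> dim L = 2 \<and> (\<forall>x\<in>L. lie_form x x = 0)"

definition principal_contact_element_net :: "(int \<Rightarrow> int \<Rightarrow> (real^6) set) \<Rightarrow> bool" where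
  "principal_contact_element_net l \<longleftrightarrow>
     (\<forall>i j. lie_line (l i j)) \<and>
     (\<forall>i j. l i j \<inter> l (i+1) j \<noteq> {0}) \<and>
     (\<forall>i j. l i j \<inter> l i (j+1) \<noteq> {0})"

definition row_span :: "(int \<Rightarrow> int \<Rightarrow> (real^6) set) \<Rightarrow> int \<Rightarrow> (real^6) set" where
  "row_span l j = span (\<Union>i. l i j)"

definition conn_plane :: "(int \<Rightarrow> int \<Rightarrow> (real^6) set) \<Rightarrow> int \<Rightarrow> int \<Rightarrow> (real^6) set" where
  "conn_plane l i j = span (l i j \<union> l i (j+1))"

definition one_family_spherical :: "(int \<Rightarrow> int \<Rightarrow> (real^6) set) \<Rightarrow> bool" where
  "one_family_spherical l \<longleftrightarrow>
     (\<forall>j. dim (row_span l j) = 5) \<and>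
     (\<forall>j. \<exists>p. p \<noteq> 0 \<and> (\<forall>i. p \<in> conn_plane l i j))"

text \<open>Genericity (standing assumption): no point of concurrency of the planes
  l i j \<or> l i (j+1) lies in the hyperplanes spanned by the j-th or (j+1)-th parameter lines.\<close>
definition generic_spherical_net :: "(int \<Rightarrow> int \<Rightarrow> (real^6) set) \<Rightarrow> bool" where
  "generic_spherical_net l \<longleftrightarrow>
     (\<forall>j p. p \<noteq> 0 \<and> (\<forall>i. p \<in> conn_plane l i j) \<longrightarrow>
        p \<notin> row_span l j \<and> p \<notin> row_span l (j+1))"

definition proj_transformation :: "(real^6 \<Rightarrow> real^6) \<Rightarrow> (real^6) set \<Rightarrow> (real^6) set \<Rightarrow> bool" where
  "proj_transformation f A B \<longleftrightarrow> linear f \<and> inj_on f A \<and> f ` A = B"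

end

theory Submission
  imports Defs
begin

text \<open>Let p be the common point of the planes l i j \<or> l i (j+1). By genericity p lies on
  neither of the hyperplanes row_span l j and row_span l (j+1), so the central projection
  from p maps the first isomorphically onto the second. It sends l i j to l i (j+1): the two
  lines meet, so they span a plane through p, and that plane meets row_span l (j+1) exactly
  in l i (j+1). Composing these projections and the ones in the opposite direction connects
  any two rows.\<close>

definition central_projection :: "'a::real_inner \<Rightarrow> 'a \<Rightarrow> 'a \<Rightarrow> 'a" where
  "central_projection a p x = x - ((a \<bullet> x) / (a \<bullet> p)) *\<^sub>R p"

lemma linear_central_projection: "linear (central_projection a p)"
  unfolding central_projection_def linear_iff
  by (auto simp: inner_add_right algebra_simps add_divide_distrib)

lemma inner_central_projection:
  assumes "a \<bullet> p \<noteq> 0"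
  shows "a \<bullet> central_projection a p x = 0"
  using assms by (simp add: central_projection_def inner_diff_right)

lemma central_projection_in_subspace:
  assumes "subspace C" "p \<in> C" "x \<in> C"
  shows "central_projection a p x \<in> C"
  using assms by (simp add: central_projection_def subspace_diff subspace_scale)

lemma inj_on_central_projection:
  assumes "subspace A" "p \<notin> A"
  shows "inj_on (central_projection a p) A"
  unfolding linear_inj_on_iff_eq_0[OF linear_central_projection assms(1)]
proof (intro ballI impI)
  fix x assume "x \<in> A" "central_projection a p x = 0"
  define c where "c = (a \<bullet> x) / (a \<bullet> p)"
  have x: "x = c *\<^sub>R p"
    using \<open>central_projection a p x = 0\<close> by (simp add: central_projection_def c_def)
  show "x = 0"
  proof (rule ccontr)
    assume "x \<noteq> 0"
    then have "c \<noteq> 0" using x by auto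
    then have "p = inverse c *\<^sub>R x" using x by simp
    then have "p \<in> A" using \<open>x \<in> A\<close> assms(1) by (simp add: subspace_scale)
    with assms(2) show False ..
  qed
qed

lemma dim_central_projection_image:
  fixes A :: "'a::euclidean_space set"
  assumes "subspace A" "p \<notin> A"
  shows "dim (central_projection a p ` A) = dim A"
proof -
  have "inj_on (central_projection a p) (span A)"
    unfolding span_eq_iff[THEN iffD2, OF assms(1)] by (rule inj_on_central_projection[OF assms])
  then show ?thesis
    by (rule dim_image_eq[OF linear_central_projection])
qed

lemma central_projection_image_hyperplane:
  fixes A :: "'a::euclidean_space set"
  assumes "subspace A" "dim A = DIM('a) - 1" "p \<notin> A" "a \<noteq> 0" "a \<bullet> p \<noteq> 0"
  shows "central_projection a p ` A = {x. a \<bullet> x = 0}"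
proof (rule subspace_dim_equal)
  show "subspace (central_projection a p ` A)"
    using linear_central_projection assms(1) by (rule linear_subspace_image)
  show "subspace {x. a \<bullet> x = 0}"
    by (rule subspace_hyperplane)
  show "central_projection a p ` A \<subseteq> {x. a \<bullet> x = 0}"
    using inner_central_projection[OF assms(5)] by auto
  show "dim {x. a \<bullet> x = 0} \<le> dim (central_projection a p ` A)"
    using dim_central_projection_image[OF assms(1,3), of a] dim_hyperplane[OF assms(4)] assms(2)
    by linarith
qed

lemma hyperplane_normalE:
  fixes H :: "'a::euclidean_space set"
  assumes "subspace H" "dim H = DIM('a) - 1"
  obtains a where "a \<noteq> 0" "H = {x. a \<bullet> x = 0}"
proof -
  obtain a where "a \<noteq> 0" "span H = {x. a \<bullet> x = 0}"
    using assms(2) dim_eq_hyperplane by blast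
  moreover have "span H = H"
    using assms(1) by (simp add: span_eq_iff)
  ultimately show thesis
    using that by simp
qed

lemma dim_span_Un_less:
  fixes U V :: "'a::euclidean_space set"
  assumes "subspace U" "subspace V" "U \<inter> V \<noteq> {0}"
  shows "dim (span (U \<union> V)) < dim U + dim V"
proof -
  have "span U = U" "span V = V"
    using assms(1,2) by (simp_all add: span_eq_iff)
  then have "span (U \<union> V) = {x + y |x y. x \<in> U \<and> y \<in> V}"
    by (simp only: span_Un)
  then have "dim (span (U \<union> V)) + dim (U \<inter> V) = dim U + dim V"
    using dim_sums_Int[OF assms(1,2)] by simp
  moreover have "\<not> U \<inter> V \<subseteq> {0}"
    using assms by (auto simp: subspace_0)
  then have "dim (U \<inter> V) \<noteq> 0" by simp
  ultimately show ?thesis by linarith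
qed

lemma subspace_Int_eq_if_dim_le_Suc:
  fixes L :: "'a::euclidean_space set"
  assumes "subspace L" "subspace C" "subspace H" "L \<subseteq> C" "L \<subseteq> H"
    and "p \<in> C" "p \<notin> H" "dim C \<le> dim L + 1"
  shows "C \<inter> H = L"
proof -
  have "C \<inter> H \<subset> C"
    using assms(6,7) by auto
  moreover have "span (C \<inter> H) = C \<inter> H" "span C = C"
    using assms(2,3) by (simp_all add: span_eq_iff subspace_inter)
  ultimately have "dim (C \<inter> H) < dim C"
    using dim_psubset by metis
  show ?thesis
  proof (rule subspace_dim_equal[symmetric])
    show "subspace L" "subspace (C \<inter> H)" "L \<subseteq> C \<inter> H"
      using assms(1-5) by (auto simp: subspace_inter)
    show "dim (C \<inter> H) \<le> dim L"
      using \<open>dim (C \<inter> H) < dim C\<close> assms(8) by linarith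
  qed
qed

lemma central_projection_line:
  fixes La Lb :: "'a::euclidean_space set"
  assumes "subspace La" "subspace Lb" "dim La = 2" "dim Lb = 2" "La \<inter> Lb \<noteq> {0}"
    and "p \<in> span (La \<union> Lb)" "p \<notin> La" "a \<bullet> p \<noteq> 0" "Lb \<subseteq> {x. a \<bullet> x = 0}"
  shows "central_projection a p ` La = Lb"
proof (rule subspace_dim_equal)
  define C where "C = span (La \<union> Lb)"
  have "dim C \<le> dim Lb + 1"
    using dim_span_Un_less[OF assms(1,2,5)] assms(3,4) by (simp add: C_def)
  moreover have "Lb \<subseteq> C"
    unfolding C_def by (meson span_superset sup_ge2 order_trans)
  moreover have "p \<in> C" "p \<notin> {x. a \<bullet> x = 0}"
    using assms(6,8) by (simp_all add: C_def)
  ultimately have CH: "C \<inter> {x. a \<bullet> x = 0} = Lb"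
    using subspace_Int_eq_if_dim_le_Suc[OF assms(2) subspace_span subspace_hyperplane]
      assms(9) unfolding C_def by blast
  have "central_projection a p x \<in> C" if "x \<in> La" for x
    using that assms(6) by (intro central_projection_in_subspace) (auto simp: C_def span_base)
  then show "central_projection a p ` La \<subseteq> Lb"
    using CH inner_central_projection[OF assms(8)] by auto
  show "subspace (central_projection a p ` La)"
    using linear_central_projection assms(1) by (rule linear_subspace_image)
  show "subspace Lb" by fact
  show "dim Lb \<le> dim (central_projection a p ` La)"
    using dim_central_projection_image[OF assms(1,7), of a] assms(3,4) by simp
qed

lemma proj_transformation_id: "proj_transformation id A A"
  by (simp add: proj_transformation_def linear_iff)

lemma proj_transformation_comp:
  assumes "proj_transformation f A B" "proj_transformation g B C"
  shows "proj_transformation (g \<circ> f) A C"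
  using assms unfolding proj_transformation_def
  by (auto simp: linear_compose comp_inj_on image_comp[symmetric])

definition rows_projectively_related :: "(int \<Rightarrow> int \<Rightarrow> (real^6) set) \<Rightarrow> int \<Rightarrow> int \<Rightarrow> bool"
  where "rows_projectively_related l j0 j1 \<longleftrightarrow>
    (\<exists>f. proj_transformation f (row_span l j0) (row_span l j1) \<and> (\<forall>i. f ` l i j0 = l i j1))"

lemma rows_projectively_related_refl: "rows_projectively_related l j j"
  unfolding rows_projectively_related_def using proj_transformation_id by fastforce

lemma rows_projectively_related_trans:
  assumes "rows_projectively_related l j0 j1" "rows_projectively_related l j1 j2"
  shows "rows_projectively_related l j0 j2"
proof -
  obtain f where f: "proj_transformation f (row_span l j0) (row_span l j1)" "\<forall>i. f ` l i j0 = l i j1"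
    using assms(1) unfolding rows_projectively_related_def by blast
  obtain g where g: "proj_transformation g (row_span l j1) (row_span l j2)" "\<forall>i. g ` l i j1 = l i j2"
    using assms(2) unfolding rows_projectively_related_def by blast
  have "\<forall>i. (g \<circ> f) ` l i j0 = l i j2"
    unfolding image_comp[symmetric] using f(2) g(2) by simp
  then show ?thesis
    using proj_transformation_comp[OF f(1) g(1)] unfolding rows_projectively_related_def by blast
qed

lemma rows_projectively_related_by_central_projection:
  assumes net: "principal_contact_element_net l" and rows: "one_family_spherical l"
    and "p \<notin> row_span l j0" "p \<notin> row_span l j1"
    and "\<And>i. p \<in> span (l i j0 \<union> l i j1)" "\<And>i. l i j0 \<inter> l i j1 \<noteq> {0}"
  shows "rows_projectively_related l j0 j1"
proof -
  have line: "subspace (l i j)" "dim (l i j) = 2" for i j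
    using net by (auto simp: principal_contact_element_net_def lie_line_def)
  have row: "subspace (row_span l j)" "dim (row_span l j) = DIM(real^6) - 1" for j
    using rows by (auto simp: one_family_spherical_def row_span_def)
  have line_in_row: "l i j \<subseteq> row_span l j" for i j
    unfolding row_span_def by (blast intro: span_base)
  obtain a where a: "a \<noteq> 0" "row_span l j1 = {x. a \<bullet> x = 0}"
    using row by (rule hyperplane_normalE)
  then have "a \<bullet> p \<noteq> 0" using assms(4) by auto
  then have "proj_transformation (central_projection a p) (row_span l j0) (row_span l j1)"
    unfolding proj_transformation_def a(2)
    using linear_central_projection inj_on_central_projection[OF row(1) assms(3)]
      central_projection_image_hyperplane[OF row assms(3) a(1)] by blast
  moreover have "central_projection a p ` l i j0 = l i j1" for i
    using line assms(3,5,6) \<open>a \<bullet> p \<noteq> 0\<close> line_in_row a(2)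
    by (intro central_projection_line) blast+
  ultimately show ?thesis
    unfolding rows_projectively_related_def by blast
qed

lemma spherical_net_adjacent_rows_related:
  assumes "principal_contact_element_net l" "one_family_spherical l" "generic_spherical_net l"
  shows "rows_projectively_related l j (j+1) \<and> rows_projectively_related l (j+1) j"
proof -
  obtain p where p: "p \<noteq> 0" "\<forall>i. p \<in> span (l i j \<union> l i (j+1))"
    using assms(2) unfolding one_family_spherical_def conn_plane_def by blast
  then have "p \<notin> row_span l j" "p \<notin> row_span l (j+1)"
    using assms(3) by (auto simp: generic_spherical_net_def conn_plane_def)
  moreover have "l i j \<inter> l i (j+1) \<noteq> {0}" for i
    using assms(1) by (simp add: principal_contact_element_net_def)
  ultimately show ?thesis
    using p(2) assms(1,2) rows_projectively_related_by_central_projection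
    by (metis Int_commute Un_commute)
qed

lemma int_relation_from_adjacent:
  fixes R :: "int \<Rightarrow> int \<Rightarrow> bool"
  assumes refl: "\<And>j. R j j" and trans: "\<And>i j k. R i j \<Longrightarrow> R j k \<Longrightarrow> R i k"
    and up: "\<And>j. R j (j+1)" and down: "\<And>j. R (j+1) j"
  shows "R i j"
proof (induction j rule: int_induct[where k = i])
  case base
  show ?case by (rule refl)
next
  case (step1 j)
  then show ?case using up trans by blast
next
  case (step2 j)
  then show ?case using down[of "j - 1"] trans by simp
qed

theorem proposition5p5:
  fixes l :: "int \<Rightarrow> int \<Rightarrow> (real^6) set"
  assumes "principal_contact_element_net l"
    and "one_family_spherical l"
    and "generic_spherical_net l"
  shows "\<forall>j0 j1. \<exists>f. proj_transformation f (row_span l j0) (row_span l j1) \<and>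
           (\<forall>i. f ` (l i j0) = l i j1)"
proof (intro allI)
  fix j0 j1
  have adjacent: "rows_projectively_related l j (j+1)" "rows_projectively_related l (j+1) j" for j
    using spherical_net_adjacent_rows_related[OF assms] by auto
  have "rows_projectively_related l j0 j1"
    by (rule int_relation_from_adjacent[where R = "rows_projectively_related l",
          OF rows_projectively_related_refl rows_projectively_related_trans adjacent])
  then show "\<exists>f. proj_transformation f (row_span l j0) (row_span l j1) \<and>
           (\<forall>i. f ` (l i j0) = l i j1)"
    unfolding rows_projectively_related_def .
qed

end
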